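(* Let $x$ be large, let $0<\kappa<1/2$, and let $(a_m)_{m\ge1}$ be a complex sequence with $a_m\ll m^{O(1/\log(1+m)^\kappa+1/\log_2x)}/m_0$, where $m_0$ is the squarefree part of $m$. Then for $B>0$ and $z\in\mathbb C$ with $|z|\le B\log x/(\log_2x\log_3x)$, \[\sum_{m=1}^\infty\frac{d_z(m)}{m}a_m\ll\exp\Bigl((2B+o(1))\frac{\log x}{\log_2x}\Bigr).\]
   Context: For $z\in\mathbb C$, $d_z$ is the multiplicative function with $d_z(p^\nu)=\Gamma(z+\nu)/(\Gamma(z)\nu!)$ (the Dirichlet coefficients of $\zeta(s)^z$). $\log_k$ is the $k$-fold iterated logarithm; $o(1)$ is as $x\to\infty$. *)

theory Defs
  imports "HOL-Analysis.Analysis" "HOL-Computational_Algebra.Primes"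
begin

text \<open>Generalized divisor function d_z: multiplicative, with
  d_z(p^nu) = Gamma(z+nu)/(Gamma(z) nu!) = pochhammer z nu / nu!
  (the rising factorial is the entire continuation of Gamma(z+nu)/Gamma(z)).\<close>
definition dz :: "complex \<Rightarrow> nat \<Rightarrow> complex" where
  "dz z m = (\<Prod>p\<in>prime_factors m. pochhammer z (multiplicity p m) / of_nat (fact (multiplicity p m)))"

text \<open>Squarefree part m_0 of m: writing m = m_0 m_1 with m_0 squarefree, m_1 squarefull,
  gcd(m_0,m_1)=1, i.e. the product of the primes dividing m exactly once.\<close>
definition sqfree_part :: "nat \<Rightarrow> nat" where
  "sqfree_part m = (\<Prod>p\<in>{p\<in>prime_factors m. multiplicity p m = 1}. p)"

end

theory Submission
  imports Defs "HOL-Real_Asymp.Real_Asymp"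
begin

text \<open>
  Put \<open>L = ln (ln x)\<close> and \<open>s = 2 A / L\<close>. The hypothesis gives
  \<open>|a m| \<le> C exp (A L powr (1/\<kappa> - 1)) m powr s / m\<^sub>0\<close>, and the sum of
  \<open>|d\<^sub>z m| m powr (s - 1) / m\<^sub>0\<close> over \<open>m \<le> N\<close> is at most an Euler product over the primes.
  For \<open>|z| \<le> R = B ln x / (L ln L)\<close> the logarithm of the local factor at \<open>p\<close> is about
  \<open>|z| p powr (s - 1)\<close> for \<open>p \<le> (R + 1) powr 4\<close>, and \<open>O((R + 1) p powr (-5/4))\<close> beyond, because
  dividing by \<open>m\<^sub>0\<close> removes the linear term. Splitting the remaining prime sum at
  \<open>W = exp (\<eta> L)\<close> and using the elementary Mertens-type bounds
  \<open>\<Sum>p\<le>n. ln p / p \<le> 2 ln n\<close> and \<open>\<Sum>p\<le>n. 1 / p \<le> 2 ln (ln n) + O(1)\<close> bounds it by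
  \<open>exp (2 A \<eta>) (2 ln L + O(1)) + O\<^sub>\<eta>(1)\<close>. As \<open>R ln L = B ln x / L\<close>, the exponent is
  \<open>2 B exp (2 A \<eta>) ln x / L + o(ln x / L)\<close>, and \<open>\<eta>\<close> is chosen with \<open>exp (2 A \<eta>) \<le> 1 + \<epsilon> / (4 B)\<close>.
\<close>

section \<open>Elementary prime sums\<close>

lemma prod_prime_factors_le:
  assumes "n > 0"
  shows "(\<Prod>p\<in>prime_factors n. p) \<le> (n::nat)"
proof -
  have "(\<Prod>p\<in>prime_factors n. p) \<le> (\<Prod>p\<in>prime_factors n. p ^ multiplicity p n)"
  proof (rule prod_mono)
    fix p assume p: "p \<in> prime_factors n"
    then have "multiplicity p n > 0" using assms by (simp add: prime_factors_multiplicity)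
    then show "0 \<le> p \<and> p \<le> p ^ multiplicity p n"
      using p prime_ge_1_nat[of p] self_le_power[of p "multiplicity p n"]
      by (auto simp: in_prime_factors_iff)
  qed
  also have "\<dots> = n" using prime_factorization_nat[OF assms] by simp
  finally show ?thesis .
qed

lemma sum_ln_prime_factors_le:
  assumes "k > 0"
  shows "(\<Sum>p\<in>prime_factors k. ln (real p)) \<le> ln (real k)"
proof -
  have "(\<Sum>p\<in>prime_factors k. ln (real p)) = ln (\<Prod>p\<in>prime_factors k. real p)"
    by (subst ln_prod) (auto simp: in_prime_factors_iff prime_gt_0_nat)
  also have "\<dots> \<le> ln (real k)"
    using prod_prime_factors_le[OF assms] assms
    by (subst ln_le_cancel_iff) (auto simp: in_prime_factors_iff prime_gt_0_nat prod_pos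
        simp flip: of_nat_prod of_nat_le_iff)
  finally show ?thesis .
qed

lemma div_le_card_multiples: "n div p \<le> card {k\<in>{1..n}. (p::nat) dvd k}"
proof (cases "p = 0")
  case True
  then show ?thesis by simp
next
  case False
  have inj: "inj_on (\<lambda>j. j * p) {1..n div p}"
    using False by (auto simp: inj_on_def)
  have "(\<lambda>j. j * p) ` {1..n div p} \<subseteq> {k\<in>{1..n}. p dvd k}"
    using False by (auto intro: order.trans[OF mult_le_mono1 div_times_less_eq_dividend])
  then have "card ((\<lambda>j. j * p) ` {1..n div p}) \<le> card {k\<in>{1..n}. p dvd k}"
    by (intro card_mono) auto
  then show ?thesis using card_image[OF inj] by simp
qed

lemma real_div_minus_one_le_div: "real n / real p - 1 \<le> real (n div (p::nat))"
  using real_of_int_floor_gt_diff_one[of "real n / real p"] floor_divide_of_nat_eq[of n p, where 'a=real]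
  by simp

text \<open>Double counting: both sides sum \<open>ln p\<close> over the pairs \<open>p dvd k\<close> with \<open>k \<le> n\<close>.\<close>
lemma sum_primes_ln_mult_card_multiples_le:
  "(\<Sum>p | prime p \<and> p \<le> n. ln (real p) * real (card {k\<in>{1..n}. p dvd k})) \<le> real n * ln (real n)"
proof -
  define P where "P = {p. prime p \<and> p \<le> n}"
  have finP: "finite P"
    unfolding P_def by simp
  have factors: "{p\<in>P. p dvd k} = prime_factors k" if k: "k \<in> {1..n}" for k
  proof -
    have "p \<le> n" if "p dvd k" for p
      using dvd_imp_le[OF that] k by auto
    then show ?thesis
      using k unfolding P_def by (auto simp: in_prime_factors_iff)
  qed
  have "(\<Sum>p\<in>P. ln (real p) * real (card {k\<in>{1..n}. p dvd k}))
      = (\<Sum>p\<in>P. \<Sum>k=1..n. if p dvd k then ln (real p) else 0)"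
    by (simp add: sum.inter_filter[symmetric] mult.commute)
  also have "\<dots> = (\<Sum>k=1..n. \<Sum>p\<in>{p\<in>P. p dvd k}. ln (real p))"
    by (subst sum.swap) (simp add: sum.inter_filter P_def[symmetric] finP)
  also have "\<dots> = (\<Sum>k=1..n. \<Sum>p\<in>prime_factors k. ln (real p))"
    using factors by simp
  also have "\<dots> \<le> (\<Sum>k=1..n. ln (real n))"
    by (intro sum_mono order.trans[OF sum_ln_prime_factors_le]) auto
  finally show ?thesis unfolding P_def by simp
qed

lemma sum_primes_ln_div_le: "(\<Sum>p | prime p \<and> p \<le> n. ln (real p) / real p) \<le> 2 * ln (real n)"
proof (cases "n = 0")
  case True
  then show ?thesis by simp
next
  case False
  define P where "P = {p. prime p \<and> p \<le> n}"
  have p: "1 \<le> real p" "real p \<le> real n" if "p \<in> P" for p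
    using that prime_ge_1_nat unfolding P_def by auto
  have "real n * (\<Sum>p\<in>P. ln (real p) / real p) - (\<Sum>p\<in>P. ln (real p))
      = (\<Sum>p\<in>P. ln (real p) * (real n / real p - 1))"
    by (simp add: sum_distrib_left sum_subtractf algebra_simps)
  also have "\<dots> \<le> (\<Sum>p\<in>P. ln (real p) * real (card {k\<in>{1..n}. p dvd k}))"
    using p by (intro sum_mono mult_left_mono
        order.trans[OF real_div_minus_one_le_div of_nat_mono[OF div_le_card_multiples]]) auto
  also have "\<dots> \<le> real n * ln (real n)"
    unfolding P_def by (rule sum_primes_ln_mult_card_multiples_le)
  finally have main: "real n * (\<Sum>p\<in>P. ln (real p) / real p) - (\<Sum>p\<in>P. ln (real p)) \<le> real n * ln (real n)" .
  have "P \<subseteq> {1..n}"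
    using p by auto
  then have "card P \<le> n"
    using card_mono[of "{1..n}" P] by simp
  have "(\<Sum>p\<in>P. ln (real p)) \<le> (\<Sum>p\<in>P. ln (real n))"
    by (intro sum_mono ln_mono) (fastforce dest: p)+
  also have "\<dots> \<le> real n * ln (real n)"
    using \<open>card P \<le> n\<close> False by (simp add: mult_right_mono)
  finally have "(\<Sum>p\<in>P. ln (real p)) \<le> real n * ln (real n)" .
  then have "real n * (\<Sum>p\<in>P. ln (real p) / real p) \<le> real n * (2 * ln (real n))"
    using main by linarith
  then show ?thesis
    using False unfolding P_def by (subst (asm) mult_le_cancel_left_pos) auto
qed

text \<open>Abel summation: with \<open>S n = (\<Sum>k=2..n. c k)\<close>, passing from \<open>n\<close> to \<open>n + 1\<close> increases
  \<open>(\<Sum>k=2..n. c k / ln k) - S n / ln n\<close> by \<open>S n * (1 / ln n - 1 / ln (n + 1))\<close>.\<close>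
lemma sum_div_ln_le_of_partial_sums:
  fixes c :: "nat \<Rightarrow> real" and K :: real
  assumes K: "K \<ge> 0" and partial: "\<And>m. m \<ge> 2 \<Longrightarrow> (\<Sum>k=2..m. c k) \<le> K * ln (real m)"
    and n: "n \<ge> 2"
  shows "(\<Sum>k=2..n. c k / ln (real k)) \<le> K * ln (ln (real n)) + K - K * ln (ln 2)"
proof -
  have "(\<Sum>k=2..n. c k / ln (real k)) - (\<Sum>k=2..n. c k) / ln (real n)
      \<le> K * ln (ln (real n)) - K * ln (ln 2)"
    using n
  proof (induction n rule: nat_induct_at_least)
    case base
    then show ?case by simp
  next
    case (Suc n)
    define S where "S = (\<Sum>k=2..n. c k)"
    have ln: "0 < ln (real n)" "ln (real n) < ln (real (Suc n))"
      using Suc.hyps by auto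
    have "S * (1 / ln (real n) - 1 / ln (real (Suc n)))
        \<le> K * ln (real n) * (1 / ln (real n) - 1 / ln (real (Suc n)))"
      using partial[OF Suc.hyps] ln unfolding S_def by (intro mult_right_mono) (auto simp: frac_le)
    also have "\<dots> = K * (1 - ln (real n) / ln (real (Suc n)))"
      using ln by (simp add: field_simps)
    also have "\<dots> \<le> K * (ln (ln (real (Suc n))) - ln (ln (real n)))"
    proof (rule mult_left_mono[OF _ K])
      have "ln (ln (real n) / ln (real (Suc n))) \<le> ln (real n) / ln (real (Suc n)) - 1"
        using ln Suc.hyps by (intro ln_le_minus_one divide_pos_pos) auto
      then show "1 - ln (real n) / ln (real (Suc n)) \<le> ln (ln (real (Suc n))) - ln (ln (real n))"
        using ln Suc.hyps by (simp add: ln_div)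
    qed
    finally have step: "S * (1 / ln (real n) - 1 / ln (real (Suc n)))
        \<le> K * (ln (ln (real (Suc n))) - ln (ln (real n)))" .
    have "(\<Sum>k=2..Suc n. c k / ln (real k)) - (\<Sum>k=2..Suc n. c k) / ln (real (Suc n))
        = ((\<Sum>k=2..n. c k / ln (real k)) - S / ln (real n)) + S * (1 / ln (real n) - 1 / ln (real (Suc n)))"
      using Suc.hyps ln unfolding S_def by (simp add: sum.cl_ivl_Suc field_simps)
    then show ?case
      using Suc.IH step unfolding S_def by (simp add: algebra_simps)
  qed
  moreover have "(\<Sum>k=2..n. c k) / ln (real n) \<le> K"
    using partial[OF n] n by (simp add: pos_divide_le_eq)
  ultimately show ?thesis by linarith
qed

lemma sum_primes_inverse_le:
  assumes "n \<ge> 2"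
  shows "(\<Sum>p | prime p \<and> p \<le> n. 1 / real p) \<le> 2 * ln (ln (real n)) + 2 - 2 * ln (ln 2)"
proof -
  define c where "c k = (if prime k then ln (real k) / real k else 0)" for k
  have primes: "{p. prime p \<and> p \<le> m} = {k\<in>{2..m}. prime k}" for m :: nat
    using prime_ge_2_nat by auto
  have "(\<Sum>k=2..m. c k) = (\<Sum>p | prime p \<and> p \<le> m. ln (real p) / real p)" for m
    unfolding c_def primes by (simp only: sum.inter_filter[OF finite_atLeastAtMost])
  then have "(\<Sum>k=2..m. c k) \<le> 2 * ln (real m)" for m
    using sum_primes_ln_div_le by simp
  then have "(\<Sum>k=2..n. c k / ln (real k)) \<le> 2 * ln (ln (real n)) + 2 - 2 * ln (ln 2)"
    using sum_div_ln_le_of_partial_sums[of 2 c n] assms by simp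
  also have "(\<Sum>k=2..n. c k / ln (real k)) = (\<Sum>p | prime p \<and> p \<le> n. 1 / real p)"
    unfolding primes sum.inter_filter[OF finite_atLeastAtMost]
    by (intro sum.cong) (auto simp: c_def)
  finally show ?thesis .
qed

lemma finite_Collect_real_le [simp]: "finite {n::nat. real n \<le> Y}"
  by (rule finite_subset[of _ "{..nat \<lfloor>Y\<rfloor>}"]) (auto intro: le_nat_floor)

lemma powr_minus_one_eq_div: "(x::real) > 0 \<Longrightarrow> x powr (s - 1) = x powr s / x"
  by (simp add: powr_diff)

lemma sum_primes_powr_le_small:
  fixes W s :: real
  assumes W: "W \<ge> 2" and s: "s \<ge> 0"
  shows "(\<Sum>p | prime p \<and> real p \<le> W. real p powr (s - 1))
    \<le> W powr s * (2 * ln (ln W) + 2 - 2 * ln (ln 2))"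
proof -
  define n where "n = nat \<lfloor>W\<rfloor>"
  have n: "2 \<le> n" "real n \<le> W"
    unfolding n_def using W le_nat_floor[of 2 W] by auto
  have primes: "{p. prime p \<and> real p \<le> W} = {p. prime p \<and> p \<le> n}"
    using n(2) unfolding n_def by (auto intro: le_nat_floor order_trans)
  have "(\<Sum>p | prime p \<and> real p \<le> W. real p powr (s - 1)) \<le> (\<Sum>p | prime p \<and> p \<le> n. W powr s * (1 / real p))"
    unfolding primes
  proof (rule sum_mono)
    fix p assume p: "p \<in> {p. prime p \<and> p \<le> n}"
    then have "2 \<le> real p" "real p \<le> W"
      using prime_ge_2_nat n(2) by (auto intro: order_trans)
    then show "real p powr (s - 1) \<le> W powr s * (1 / real p)"
      using s by (simp add: powr_minus_one_eq_div divide_right_mono powr_mono2)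
  qed
  also have "\<dots> = W powr s * (\<Sum>p | prime p \<and> p \<le> n. 1 / real p)"
    by (simp add: sum_distrib_left)
  also have "\<dots> \<le> W powr s * (2 * ln (ln (real n)) + 2 - 2 * ln (ln 2))"
    by (intro mult_left_mono sum_primes_inverse_le n) simp
  also have "\<dots> \<le> W powr s * (2 * ln (ln W) + 2 - 2 * ln (ln 2))"
    using n by (intro mult_left_mono) auto
  finally show ?thesis .
qed

lemma powr_minus_one_le_ln_ratio:
  fixes W Y s x :: real
  assumes W: "1 < W" "W < x" and Y: "x \<le> Y" and s: "0 \<le> s"
  shows "x powr (s - 1) \<le> Y powr s / ln W * (ln x / x)"
proof -
  have "x powr s * 1 \<le> Y powr s * (ln x / ln W)"
    using W Y s by (intro mult_mono powr_mono2) auto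
  then have "x powr s / x \<le> Y powr s * (ln x / ln W) / x"
    using W by (intro divide_right_mono) auto
  then show ?thesis
    using W by (simp add: powr_minus_one_eq_div)
qed

lemma sum_primes_powr_le_large:
  fixes W Y s :: real
  assumes W: "W > 1" and Y: "Y \<ge> 1" and s: "s \<ge> 0"
  shows "(\<Sum>p | prime p \<and> W < real p \<and> real p \<le> Y. real p powr (s - 1)) \<le> Y powr s * (2 * ln Y / ln W)"
proof -
  define k where "k = nat \<lfloor>Y\<rfloor>"
  have k: "1 \<le> real k" "real k \<le> Y"
    unfolding k_def using Y le_nat_floor[of 1 Y] by auto
  have "(\<Sum>p | prime p \<and> W < real p \<and> real p \<le> Y. real p powr (s - 1))
      \<le> (\<Sum>p | prime p \<and> W < real p \<and> real p \<le> Y. Y powr s / ln W * (ln (real p) / real p))"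
    using W s by (intro sum_mono powr_minus_one_le_ln_ratio) auto
  also have "\<dots> = Y powr s / ln W * (\<Sum>p | prime p \<and> W < real p \<and> real p \<le> Y. ln (real p) / real p)"
    by (simp add: sum_distrib_left)
  also have "\<dots> \<le> Y powr s / ln W * (2 * ln Y)"
  proof (rule mult_left_mono)
    have "(\<Sum>p | prime p \<and> W < real p \<and> real p \<le> Y. ln (real p) / real p)
        \<le> (\<Sum>p | prime p \<and> p \<le> k. ln (real p) / real p)"
      unfolding k_def
      by (rule sum_mono2) (auto intro!: le_nat_floor divide_nonneg_nonneg dest: prime_ge_1_nat)
    also have "\<dots> \<le> 2 * ln (real k)"
      by (rule sum_primes_ln_div_le)
    also have "\<dots> \<le> 2 * ln Y"
      using k by simp
    finally show "(\<Sum>p | prime p \<and> W < real p \<and> real p \<le> Y. ln (real p) / real p) \<le> 2 * ln Y" .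
  qed (use W in simp)
  finally show ?thesis
    by simp
qed

lemma sum_primes_powr_le:
  fixes W Y s :: real
  assumes W: "W \<ge> 2" and Y: "Y \<ge> 1" and s: "s \<ge> 0"
  shows "(\<Sum>p | prime p \<and> real p \<le> Y. real p powr (s - 1))
    \<le> W powr s * (2 * ln (ln W) + 2 - 2 * ln (ln 2)) + Y powr s * (2 * ln Y / ln W)"
proof -
  have "(\<Sum>p | prime p \<and> real p \<le> Y. real p powr (s - 1))
      \<le> (\<Sum>p \<in> {p. prime p \<and> real p \<le> W} \<union> {p. prime p \<and> W < real p \<and> real p \<le> Y}. real p powr (s - 1))"
    by (intro sum_mono2) auto
  also have "\<dots> = (\<Sum>p | prime p \<and> real p \<le> W. real p powr (s - 1))
      + (\<Sum>p | prime p \<and> W < real p \<and> real p \<le> Y. real p powr (s - 1))"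
    by (intro sum.union_disjoint) auto
  also have "\<dots> \<le> W powr s * (2 * ln (ln W) + 2 - 2 * ln (ln 2)) + Y powr s * (2 * ln Y / ln W)"
    using W s Y by (intro add_mono sum_primes_powr_le_small sum_primes_powr_le_large) auto
  finally show ?thesis .
qed

lemma sum_primes_powr_scaled_le:
  fixes A L \<eta> Y :: real
  assumes A: "A \<ge> 0" and \<eta>: "0 < \<eta>" "\<eta> \<le> 1" "ln 2 \<le> \<eta> * L" and Y: "1 \<le> Y" "ln Y \<le> 4 * L"
  shows "(\<Sum>p | prime p \<and> real p \<le> Y. real p powr (2 * A / L - 1))
    \<le> exp (2 * A * \<eta>) * (2 * ln L + 2 - 2 * ln (ln 2)) + 8 * exp (8 * A) / \<eta>"
proof -
  define s where "s = 2 * A / L"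
  define W where "W = exp (\<eta> * L)"
  have "0 < ln (2::real)"
    by simp
  then have "0 < \<eta> * L"
    using \<eta>(3) by linarith
  then have L: "0 < L"
    using \<eta>(1) by (simp add: zero_less_mult_iff)
  have s: "0 \<le> s"
    unfolding s_def using A L by simp
  have W: "2 \<le> W" "ln W = \<eta> * L"
    unfolding W_def using exp_mono[OF \<eta>(3)] by auto
  have Ws: "W powr s = exp (2 * A * \<eta>)"
    unfolding powr_def W(2) s_def using W L by simp
  have "ln (ln W) = ln \<eta> + ln L"
    using W(2) \<eta> L by (simp add: ln_mult)
  then have "ln (ln W) \<le> ln L"
    using \<eta> by simp
  then have small: "W powr s * (2 * ln (ln W) + 2 - 2 * ln (ln 2)) \<le> exp (2 * A * \<eta>) * (2 * ln L + 2 - 2 * ln (ln 2))"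
    unfolding Ws by (intro mult_left_mono) auto
  have "s * ln Y \<le> s * (4 * L)"
    using Y s by (intro mult_left_mono) auto
  then have Ys: "Y powr s \<le> exp (8 * A)"
    using Y L unfolding powr_def s_def by auto
  have "2 * ln Y / ln W \<le> 2 * (4 * L) / (\<eta> * L)"
    using Y \<eta> L unfolding W(2) by (intro divide_right_mono) auto
  then have lnY: "2 * ln Y / ln W \<le> 8 / \<eta>"
    using L by simp
  have "W powr s * (2 * ln (ln W) + 2 - 2 * ln (ln 2)) + Y powr s * (2 * ln Y / ln W)
      \<le> exp (2 * A * \<eta>) * (2 * ln L + 2 - 2 * ln (ln 2)) + exp (8 * A) * (8 / \<eta>)"
    using Ys lnY Y W L \<eta> by (intro add_mono[OF small] mult_mono) auto
  then show ?thesis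
    using sum_primes_powr_le[OF W(1) Y(1) s] unfolding s_def by (simp add: mult.commute)
qed

section \<open>Euler products\<close>

lemma multiplicity_le_self:
  assumes "m > 0" "prime p"
  shows "multiplicity p m \<le> (m::nat)"
proof -
  have "multiplicity p m < 2 ^ multiplicity p m"
    by (rule less_exp)
  also have "\<dots> \<le> p ^ multiplicity p m"
    using prime_ge_2_nat[OF assms(2)] by (rule power_mono) simp
  also have "\<dots> \<le> m"
    using assms by (intro dvd_imp_le multiplicity_dvd) auto
  finally show ?thesis
    by simp
qed

lemma inj_on_restrict_multiplicity:
  "inj_on (\<lambda>m. restrict (\<lambda>p. multiplicity p m) {p. prime p \<and> p \<le> N}) {1..(N::nat)}"
proof (rule inj_onI)
  fix m m' :: nat
  assume m: "m \<in> {1..N}" "m' \<in> {1..N}"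
    and eq: "restrict (\<lambda>p. multiplicity p m) {p. prime p \<and> p \<le> N}
      = restrict (\<lambda>p. multiplicity p m') {p. prime p \<and> p \<le> N}"
  have "multiplicity p m = multiplicity p m'" if p: "prime p" for p
  proof (cases "p \<le> N")
    case True
    then show ?thesis using fun_cong[OF eq, of p] p by simp
  next
    case False
    then have "\<not> p dvd m" "\<not> p dvd m'"
      using m by (auto dest: dvd_imp_le)
    then show ?thesis by (simp add: not_dvd_imp_multiplicity_0)
  qed
  then have "normalize m = normalize m'"
    using m by (intro multiplicity_eq_imp_eq) auto
  then show "m = m'" by simp
qed

text \<open>Each \<open>m \<le> N\<close> corresponds to its exponent vector over the primes \<open>p \<le> N\<close>, with exponents
  at most \<open>N\<close>; expanding the product gives a sum over all such vectors.\<close>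
lemma sum_multiplicative_le_euler_product:
  fixes h :: "nat \<Rightarrow> nat \<Rightarrow> real"
  assumes h_nonneg: "\<And>p v. 0 \<le> h p v" and h_0: "\<And>p. h p 0 = 1"
  shows "(\<Sum>m=1..N. \<Prod>p\<in>prime_factors m. h p (multiplicity p m))
    \<le> (\<Prod>p | prime p \<and> p \<le> N. \<Sum>v\<le>N. h p v)"
proof -
  define P where "P = {p. prime p \<and> p \<le> N}"
  define F where "F g = (\<Prod>p\<in>P. h p (g p))" for g
  define exps where "exps m = restrict (\<lambda>p. multiplicity p m) P" for m
  have finP: "finite P"
    unfolding P_def by simp
  have F_exps: "F (exps m) = (\<Prod>p\<in>prime_factors m. h p (multiplicity p m))" if m: "m \<in> {1..N}" for m
  proof -
    have "prime_factors m \<subseteq> P"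
      using m unfolding P_def by (auto simp: in_prime_factors_iff intro: order.trans[OF dvd_imp_le])
    moreover have "h p (multiplicity p m) = 1" if "p \<in> P - prime_factors m" for p
      using that m h_0 unfolding P_def by (auto simp: in_prime_factors_iff not_dvd_imp_multiplicity_0)
    ultimately show ?thesis
      unfolding F_def exps_def using finP by (auto intro!: prod.mono_neutral_right)
  qed
  have inj: "inj_on exps {1..N}"
    unfolding exps_def P_def by (rule inj_on_restrict_multiplicity)
  have img: "exps ` {1..N} \<subseteq> PiE P (\<lambda>_. {..N})"
  proof -
    have "multiplicity p m \<le> N" if "m \<in> {1..N}" "prime p" for m p
      using multiplicity_le_self[of m p] that by auto
    then show ?thesis
      unfolding image_subset_iff exps_def restrict_PiE_iff P_def by auto
  qed
  have "(\<Sum>m=1..N. \<Prod>p\<in>prime_factors m. h p (multiplicity p m)) = (\<Sum>m=1..N. F (exps m))"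
    using F_exps by simp
  also have "\<dots> = (\<Sum>g\<in>exps ` {1..N}. F g)"
    using sum.reindex[OF inj, of F] by simp
  also have "\<dots> \<le> (\<Sum>g\<in>PiE P (\<lambda>_. {..N}). F g)"
    using img finP by (intro sum_mono2) (auto simp: finite_PiE F_def h_nonneg prod_nonneg)
  also have "\<dots> = (\<Prod>p\<in>P. \<Sum>v\<le>N. h p v)"
    unfolding F_def using finP by (rule prod_sum_PiE[symmetric]) auto
  finally show ?thesis
    unfolding P_def .
qed

section \<open>Local factors\<close>

lemma pochhammer_nonneg_of_nonneg: "(x::'a::linordered_semidom) \<ge> 0 \<Longrightarrow> pochhammer x n \<ge> 0"
  by (induction n) (auto simp: pochhammer_Suc)

lemma norm_pochhammer_le: "norm (pochhammer (z::complex) n) \<le> pochhammer (norm z) n"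
proof (induction n)
  case 0
  then show ?case by simp
next
  case (Suc n)
  have "norm (pochhammer z (Suc n)) = norm (pochhammer z n) * norm (z + of_nat n)"
    by (simp add: pochhammer_Suc norm_mult)
  also have "\<dots> \<le> pochhammer (norm z) n * (norm z + real n)"
    using Suc.IH norm_triangle_ineq[of z "of_nat n"]
    by (intro mult_mono) (auto simp: pochhammer_nonneg_of_nonneg)
  also have "\<dots> = pochhammer (norm z) (Suc n)"
    by (simp add: pochhammer_Suc)
  finally show ?case .
qed

definition dz_coeff :: "real \<Rightarrow> nat \<Rightarrow> real" where
  "dz_coeff r v = pochhammer r v / fact v"

lemma dz_coeff_0 [simp]: "dz_coeff r 0 = 1"
  unfolding dz_coeff_def by simp

lemma dz_coeff_nonneg: "r \<ge> 0 \<Longrightarrow> dz_coeff r v \<ge> 0"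
  unfolding dz_coeff_def by (simp add: pochhammer_nonneg_of_nonneg)

lemma dz_coeff_le_power: "r \<ge> 0 \<Longrightarrow> dz_coeff r v \<le> (r + 1) ^ v"
proof (induction v)
  case 0
  then show ?case by simp
next
  case (Suc v)
  have "dz_coeff r (Suc v) = dz_coeff r v * ((r + real v) / (real v + 1))"
    unfolding dz_coeff_def by (simp add: pochhammer_Suc fact_Suc field_simps)
  also have "\<dots> \<le> (r + 1) ^ v * (r + 1)"
    using Suc dz_coeff_nonneg[of r v] by (intro mult_mono) (auto simp: field_simps)
  finally show ?case
    by (simp add: mult.commute)
qed

lemma norm_dz_le: "norm (dz z m) \<le> (\<Prod>p\<in>prime_factors m. dz_coeff (norm z) (multiplicity p m))"
  unfolding dz_def dz_coeff_def prod_norm[symmetric]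
  by (intro prod_mono) (auto simp: norm_divide divide_right_mono norm_pochhammer_le)

text \<open>The generalized binomial series \<open>(1 - q) powr (-r) = (\<Sum>v. dz_coeff r v * q ^ v)\<close>.\<close>
lemma sum_dz_coeff_power_le:
  assumes r: "r \<ge> 0" and q: "0 \<le> q" "q < 1" and A: "finite A"
  shows "(\<Sum>v\<in>A. dz_coeff r v * q ^ v) \<le> (1 - q) powr (-r)"
proof -
  have "dz_coeff r v * q ^ v = ((-r) gchoose v) * (-q) ^ v" for v
    unfolding dz_coeff_def gbinomial_pochhammer by (simp add: power_minus' field_simps)
  then have sums: "(\<lambda>v. dz_coeff r v * q ^ v) sums (1 - q) powr (-r)"
    using gen_binomial_real[of "-q" "-r"] q by simp
  show ?thesis
    using sum_le_suminf[OF sums_summable[OF sums] A] sums_unique[OF sums] dz_coeff_nonneg[OF r] q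
    by simp
qed

text \<open>For \<open>r = norm z\<close> this is the local factor at \<open>p ^ v\<close> of \<open>norm (dz z m) * m powr (s - 1) / m\<^sub>0\<close>;
  the extra factor \<open>1 / p\<close> at \<open>v = 1\<close> comes from the squarefree part \<open>m\<^sub>0\<close>.\<close>
definition euler_term :: "real \<Rightarrow> real \<Rightarrow> real \<Rightarrow> nat \<Rightarrow> real" where
  "euler_term r s p v =
    (if v = 1 then r * p powr (s - 1) / p else dz_coeff r v * (p powr (s - 1)) ^ v)"

lemma euler_term_0 [simp]: "euler_term r s p 0 = 1"
  unfolding euler_term_def by simp

lemma euler_term_nonneg: "r \<ge> 0 \<Longrightarrow> p \<ge> 0 \<Longrightarrow> euler_term r s p v \<ge> 0"
  unfolding euler_term_def using dz_coeff_nonneg by auto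

lemma one_le_sum_euler_term: "r \<ge> 0 \<Longrightarrow> p \<ge> 0 \<Longrightarrow> 1 \<le> (\<Sum>v\<le>N. euler_term r s p v)"
  using member_le_sum[of 0 "{..N}" "euler_term r s p"] euler_term_nonneg by simp

lemma powr_minus_one_le_three_quarters:
  fixes p s :: real
  assumes p: "p \<ge> 2" and s: "s \<le> 1/2"
  shows "p powr (s - 1) \<le> 3/4"
proof -
  have "(p powr (s - 1)) ^ 2 = p powr (2 * (s - 1))"
    using p powr_power[of p "s - 1" 2] by simp
  also have "\<dots> \<le> p powr (-1)"
    using p s by (intro powr_mono) auto
  also have "\<dots> = 1 / p"
    using p by (simp add: powr_minus divide_inverse)
  also have "\<dots> \<le> (3/4) ^ 2"
    using p by (simp add: divide_le_eq power2_eq_square)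
  finally show ?thesis
    by (rule power2_le_imp_le) simp
qed

lemma ln_sum_euler_term_le_binomial:
  assumes r: "r \<ge> 0" and p: "p \<ge> 2" and s: "s \<le> 1/2"
  defines "q \<equiv> p powr (s - 1)"
  shows "ln (\<Sum>v\<le>N. euler_term r s p v) \<le> r * q + 4 * r * q ^ 2"
proof -
  have q: "0 < q" "q \<le> 3/4"
    unfolding q_def using p powr_minus_one_le_three_quarters[OF p s] by auto
  have "(\<Sum>v\<le>N. euler_term r s p v) \<le> (\<Sum>v\<le>N. dz_coeff r v * q ^ v)"
  proof (rule sum_mono)
    fix v
    have "r * q / p \<le> r * q / 1"
      using r q p by (intro divide_left_mono) auto
    then show "euler_term r s p v \<le> dz_coeff r v * q ^ v"
      unfolding euler_term_def q_def by (auto simp: dz_coeff_def)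
  qed
  also have "\<dots> \<le> (1 - q) powr (-r)"
    using sum_dz_coeff_power_le[OF r] q by simp
  finally have "ln (\<Sum>v\<le>N. euler_term r s p v) \<le> ln ((1 - q) powr (-r))"
    using one_le_sum_euler_term[OF r, of p s N] p by (intro ln_mono) auto
  also have "\<dots> = r * (- ln (1 - q))"
    using q by (simp add: ln_powr)
  also have "\<dots> \<le> r * (q + 4 * q ^ 2)"
  proof (rule mult_left_mono[OF _ r])
    have "- ln (1 - q) = ln (1 / (1 - q))"
      using q by (simp add: ln_div)
    also have "\<dots> \<le> 1 / (1 - q) - 1"
      using q by (intro ln_le_minus_one) auto
    also have "\<dots> = q + q ^ 2 / (1 - q)"
      using q by (simp add: field_simps power2_eq_square)
    also have "\<dots> \<le> q + 4 * q ^ 2"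
      using q divide_left_mono[of "1/4" "1 - q" "q ^ 2"] by simp
    finally show "- ln (1 - q) \<le> q + 4 * q ^ 2" .
  qed
  finally show ?thesis
    by (simp add: algebra_simps)
qed

lemma sum_power_from_2_le:
  fixes t :: real
  assumes "0 \<le> t" "t \<le> 1/2"
  shows "(\<Sum>v=2..N. t ^ v) \<le> 2 * t ^ 2"
proof (cases "N < 2")
  case True
  then show ?thesis using assms by simp
next
  case False
  then have "(\<Sum>v=2..N. t ^ v) = (t ^ 2 - t ^ Suc N) / (1 - t)"
    using assms by (subst sum_gp) auto
  also have "\<dots> \<le> t ^ 2 / (1/2)"
    using assms by (intro frac_le) auto
  finally show ?thesis
    by simp
qed

lemma ln_sum_euler_term_le_geometric:
  assumes r: "r \<ge> 0" and p: "p \<ge> 2" and s: "s \<le> 1/2" and N: "N \<ge> 1"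
  defines "q \<equiv> p powr (s - 1)"
  assumes small: "(r + 1) * q \<le> 1/2"
  shows "ln (\<Sum>v\<le>N. euler_term r s p v) \<le> r * q / p + 2 * (r + 1) ^ 2 * q ^ 2"
proof -
  have q: "0 < q"
    unfolding q_def using p by simp
  have "{..N} = insert 0 (insert 1 {2..N})"
    using N by auto
  then have "(\<Sum>v\<le>N. euler_term r s p v) = 1 + r * q / p + (\<Sum>v=2..N. dz_coeff r v * q ^ v)"
    by (simp add: euler_term_def q_def)
  also have "(\<Sum>v=2..N. dz_coeff r v * q ^ v) \<le> (\<Sum>v=2..N. ((r + 1) * q) ^ v)"
    using dz_coeff_le_power[OF r] q
    by (intro sum_mono) (simp add: power_mult_distrib mult_right_mono)
  also have "\<dots> \<le> 2 * ((r + 1) * q) ^ 2"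
    using r q small by (intro sum_power_from_2_le) auto
  finally have "(\<Sum>v\<le>N. euler_term r s p v) - 1 \<le> r * q / p + 2 * (r + 1) ^ 2 * q ^ 2"
    by (simp add: power_mult_distrib)
  moreover have "ln (\<Sum>v\<le>N. euler_term r s p v) \<le> (\<Sum>v\<le>N. euler_term r s p v) - 1"
    using one_le_sum_euler_term[OF r, of p s N] p by (intro ln_le_minus_one) auto
  ultimately show ?thesis
    by linarith
qed

lemma powr_eq_prod_prime_factors:
  assumes "m > 0"
  shows "real m powr a = (\<Prod>p\<in>prime_factors m. (real p powr a) ^ multiplicity p m)"
proof -
  have "real m = (\<Prod>p\<in>prime_factors m. real p ^ multiplicity p m)"
    using prime_factorization_nat[OF assms] by (metis (no_types, lifting) of_nat_power of_nat_prod prod.cong)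
  then have "real m powr a = (\<Prod>p\<in>prime_factors m. (real p ^ multiplicity p m) powr a)"
    by (simp add: prod_powr_distrib)
  also have "\<dots> = (\<Prod>p\<in>prime_factors m. (real p powr a) ^ multiplicity p m)"
  proof (intro prod.cong refl)
    fix p assume "p \<in> prime_factors m"
    then have p: "real p > 0"
      by (auto simp: in_prime_factors_iff prime_gt_0_nat)
    have "(real p ^ multiplicity p m) powr a = (real p powr real (multiplicity p m)) powr a"
      using p by (simp add: powr_realpow)
    also have "\<dots> = (real p powr a) ^ multiplicity p m"
      using p by (simp add: powr_powr powr_power mult.commute)
    finally show "(real p ^ multiplicity p m) powr a = (real p powr a) ^ multiplicity p m" .
  qed
  finally show ?thesis .
qed

lemma real_sqfree_part_eq_prod:
  "real (sqfree_part m) = (\<Prod>p\<in>prime_factors m. if multiplicity p m = 1 then real p else 1)"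
  unfolding sqfree_part_def by (simp add: prod.inter_filter[symmetric])

lemma sqfree_part_pos: "sqfree_part m > 0"
  unfolding sqfree_part_def by (intro prod_pos) (auto simp: in_prime_factors_iff prime_gt_0_nat)

lemma norm_dz_weighted_le_prod_euler_term:
  assumes "m > 0"
  shows "norm (dz z m) * real m powr (s - 1) / real (sqfree_part m)
    \<le> (\<Prod>p\<in>prime_factors m. euler_term (norm z) s (real p) (multiplicity p m))"
proof -
  let ?v = "\<lambda>p. multiplicity p m"
  have "norm (dz z m) * real m powr (s - 1) / real (sqfree_part m)
     \<le> (\<Prod>p\<in>prime_factors m. dz_coeff (norm z) (?v p)) * (\<Prod>p\<in>prime_factors m. (real p powr (s - 1)) ^ ?v p)
        / (\<Prod>p\<in>prime_factors m. if ?v p = 1 then real p else 1)"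
    unfolding powr_eq_prod_prime_factors[OF assms] real_sqfree_part_eq_prod
    by (intro divide_right_mono mult_right_mono norm_dz_le) (auto intro!: prod_nonneg)
  also have "\<dots> = (\<Prod>p\<in>prime_factors m.
      dz_coeff (norm z) (?v p) * (real p powr (s - 1)) ^ ?v p / (if ?v p = 1 then real p else 1))"
    by (simp add: prod.distrib prod_dividef)
  also have "\<dots> = (\<Prod>p\<in>prime_factors m. euler_term (norm z) s (real p) (?v p))"
    by (intro prod.cong refl) (auto simp: euler_term_def dz_coeff_def)
  finally show ?thesis .
qed

definition zeta_5_4 :: real where
  "zeta_5_4 = (\<Sum>n. real n powr (-5/4))"

lemma summable_zeta_5_4: "summable (\<lambda>n. real n powr (-5/4))"
  by (subst summable_real_powr_iff) simp

lemma sum_le_zeta_5_4: "finite A \<Longrightarrow> (\<Sum>n\<in>A. real n powr (-5/4)) \<le> zeta_5_4"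
  unfolding zeta_5_4_def by (rule sum_le_suminf[OF summable_zeta_5_4]) auto

lemma powr_minus_one_squared_le:
  fixes p s :: real
  assumes "p \<ge> 1" "s \<le> 1/8"
  shows "(p powr (s - 1)) ^ 2 \<le> p powr (-5/4)"
  using assms powr_power[of p "s - 1" 2] by (simp add: powr_mono)

lemma one_le_of_fourth_power_less:
  fixes p \<rho> :: real
  assumes "1 \<le> \<rho>" "\<rho> powr 4 < p"
  shows "1 \<le> p"
proof -
  have "1 \<le> \<rho> powr 4"
    using assms by (intro ge_one_powr_ge_zero) auto
  then show ?thesis
    using assms by linarith
qed

lemma mult_powr_le_half_above_fourth_power:
  fixes p t \<rho> s :: real
  assumes t: "0 \<le> t" "t \<le> \<rho>" and \<rho>: "2 \<le> \<rho>" and s: "s \<le> 1/8" and p: "\<rho> powr 4 < p"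
  shows "t * p powr (s - 1) \<le> 1/2"
proof -
  have p1: "1 \<le> p"
    using one_le_of_fourth_power_less[of \<rho> p] \<rho> p by simp
  have "p powr (s - 1) \<le> p powr (-7/8)"
    using p1 s by (intro powr_mono) auto
  also have "\<dots> \<le> (\<rho> powr 4) powr (-7/8)"
    using p \<rho> by (intro powr_mono2') auto
  also have "\<dots> = \<rho> powr (-7/2)"
    by (simp add: powr_powr)
  finally have "t * p powr (s - 1) \<le> \<rho> * \<rho> powr (-7/2)"
    using t \<rho> by (intro mult_mono) auto
  also have "\<dots> = \<rho> powr (-5/2)"
    using \<rho> by (simp add: powr_mult_base)
  also have "\<dots> \<le> \<rho> powr (-1)"
    using \<rho> by (intro powr_mono) auto
  also have "\<dots> = 1 / \<rho>"
    using \<rho> by (simp add: powr_minus divide_inverse)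
  also have "\<dots> \<le> 1/2"
    using \<rho> by simp
  finally show ?thesis .
qed

lemma square_mult_powr_le_above_fourth_power:
  fixes p t \<rho> s :: real
  assumes t: "0 \<le> t" "t \<le> \<rho>" and \<rho>: "2 \<le> \<rho>" and s: "s \<le> 1/8" and p: "\<rho> powr 4 < p"
  shows "t ^ 2 * p powr (2 * s - 2) \<le> p powr (-5/4)"
proof -
  have p1: "1 \<le> p"
    using one_le_of_fourth_power_less[of \<rho> p] \<rho> p by simp
  have "(\<rho> powr 4) powr (-1/2) = \<rho> powr (4 * (-1/2))"
    by (rule powr_powr)
  also have "4 * (-1/2) = - (2::real)"
    by simp
  also have "\<rho> powr - 2 = inverse (\<rho> powr 2)"
    by (rule powr_minus)
  also have "\<rho> powr 2 = \<rho> ^ 2"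
    using \<rho> by (simp add: powr_numeral)
  finally have \<rho>4: "(\<rho> powr 4) powr (-1/2) = 1 / \<rho> ^ 2"
    by (simp only: inverse_eq_divide)
  have "p powr (2 * s - 2) \<le> p powr (-7/4)"
    using p1 s by (intro powr_mono) auto
  also have "\<dots> = p powr (-1/2) * p powr (-5/4)"
    using p1 by (simp add: powr_add[symmetric])
  also have "\<dots> \<le> 1 / \<rho> ^ 2 * p powr (-5/4)"
    unfolding \<rho>4[symmetric] using p \<rho> by (intro mult_right_mono powr_mono2') auto
  finally have "t ^ 2 * p powr (2 * s - 2) \<le> \<rho> ^ 2 * (1 / \<rho> ^ 2 * p powr (-5/4))"
    using t by (intro mult_mono power_mono) auto
  also have "\<dots> = p powr (-5/4)"
    using \<rho> by simp
  finally show ?thesis .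
qed

lemma ln_sum_euler_term_le_above_fourth_power:
  fixes p r R s :: real
  assumes r: "0 \<le> r" "r \<le> R" and R: "R \<ge> 1" and s: "0 \<le> s" "s \<le> 1/8"
    and p: "p > (R + 1) powr 4" and N: "N \<ge> 1"
  shows "ln (\<Sum>v\<le>N. euler_term r s p v) \<le> (r + 2) * p powr (-5/4)"
proof -
  have \<rho>: "0 \<le> r + 1" "r + 1 \<le> R + 1" "2 \<le> R + 1"
    using r R by auto
  have "(2::real) powr 4 \<le> (R + 1) powr 4"
    using R by (intro powr_mono2) auto
  then have p2: "2 \<le> p"
    using p by simp
  have "ln (\<Sum>v\<le>N. euler_term r s p v) \<le> r * p powr (s - 1) / p + 2 * (r + 1) ^ 2 * (p powr (s - 1)) ^ 2"
    using r s p2 N mult_powr_le_half_above_fourth_power[OF \<rho> s(2) p]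
    by (intro ln_sum_euler_term_le_geometric) auto
  also have "r * p powr (s - 1) / p \<le> r * p powr (-5/4)"
  proof -
    have "p powr (s - 1) / p = p powr ((s - 1) - 1)"
      using p2 powr_diff[of p "s - 1" 1] by simp
    also have "\<dots> \<le> p powr (-5/4)"
      using p2 s by (intro powr_mono) auto
    finally show ?thesis
      using r mult_left_mono by fastforce
  qed
  also have "2 * (r + 1) ^ 2 * (p powr (s - 1)) ^ 2 \<le> 2 * p powr (-5/4)"
    using square_mult_powr_le_above_fourth_power[OF \<rho> s(2) p] p2 powr_power[of p "s - 1" 2]
    by (simp add: algebra_simps)
  finally show ?thesis
    by (simp add: algebra_simps)
qed

lemma sum_ln_euler_factor_le_small:
  fixes r R s Y :: real
  assumes r: "0 \<le> r" "r \<le> R" and s: "0 \<le> s" "s \<le> 1/8"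
  shows "(\<Sum>p | prime p \<and> p \<le> N \<and> real p \<le> Y. ln (\<Sum>v\<le>N. euler_term r s (real p) v))
    \<le> R * (\<Sum>p | prime p \<and> real p \<le> Y. real p powr (s - 1)) + 4 * R * zeta_5_4"
proof -
  let ?P = "{p. prime p \<and> p \<le> N \<and> real p \<le> Y}"
  have "(\<Sum>p\<in>?P. ln (\<Sum>v\<le>N. euler_term r s (real p) v))
      \<le> (\<Sum>p\<in>?P. R * real p powr (s - 1) + 4 * R * real p powr (-5/4))"
  proof (rule sum_mono)
    fix p assume "p \<in> ?P"
    then have p: "2 \<le> real p"
      using prime_ge_2_nat[of p] by auto
    have "ln (\<Sum>v\<le>N. euler_term r s (real p) v) \<le> r * real p powr (s - 1) + 4 * r * (real p powr (s - 1)) ^ 2"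
      using r s p by (intro ln_sum_euler_term_le_binomial) auto
    also have "\<dots> \<le> R * real p powr (s - 1) + 4 * R * real p powr (-5/4)"
      using r s p powr_minus_one_squared_le[of "real p" s]
      by (intro add_mono mult_mono mult_right_mono) auto
    finally show "ln (\<Sum>v\<le>N. euler_term r s (real p) v) \<le> R * real p powr (s - 1) + 4 * R * real p powr (-5/4)" .
  qed
  also have "\<dots> = R * (\<Sum>p\<in>?P. real p powr (s - 1)) + 4 * R * (\<Sum>p\<in>?P. real p powr (-5/4))"
    by (simp add: sum.distrib sum_distrib_left)
  also have "\<dots> \<le> R * (\<Sum>p | prime p \<and> real p \<le> Y. real p powr (s - 1)) + 4 * R * zeta_5_4"
    using r by (intro add_mono mult_left_mono sum_mono2 sum_le_zeta_5_4) auto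
  finally show ?thesis .
qed

lemma sum_ln_euler_factor_le_large:
  fixes r R s :: real
  assumes r: "0 \<le> r" "r \<le> R" and R: "1 \<le> R" and s: "0 \<le> s" "s \<le> 1/8"
  shows "(\<Sum>p | prime p \<and> p \<le> N \<and> (R + 1) powr 4 < real p. ln (\<Sum>v\<le>N. euler_term r s (real p) v))
    \<le> (R + 2) * zeta_5_4"
proof -
  let ?P = "{p. prime p \<and> p \<le> N \<and> (R + 1) powr 4 < real p}"
  have "(\<Sum>p\<in>?P. ln (\<Sum>v\<le>N. euler_term r s (real p) v)) \<le> (\<Sum>p\<in>?P. (R + 2) * real p powr (-5/4))"
  proof (rule sum_mono)
    fix p assume p: "p \<in> ?P"
    then have "1 \<le> N"
      using prime_ge_2_nat[of p] by auto
    then have "ln (\<Sum>v\<le>N. euler_term r s (real p) v) \<le> (r + 2) * real p powr (-5/4)"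
      using r R s p by (intro ln_sum_euler_term_le_above_fourth_power) auto
    also have "\<dots> \<le> (R + 2) * real p powr (-5/4)"
      using r by (intro mult_right_mono) auto
    finally show "ln (\<Sum>v\<le>N. euler_term r s (real p) v) \<le> (R + 2) * real p powr (-5/4)" .
  qed
  also have "\<dots> \<le> (R + 2) * zeta_5_4"
    using R sum_le_zeta_5_4[of ?P] by (simp add: sum_distrib_left[symmetric])
  finally show ?thesis .
qed

lemma sum_ln_euler_factor_le:
  fixes r R s :: real
  assumes r: "0 \<le> r" "r \<le> R" and R: "1 \<le> R" and s: "0 \<le> s" "s \<le> 1/8"
  shows "(\<Sum>p | prime p \<and> p \<le> N. ln (\<Sum>v\<le>N. euler_term r s (real p) v))
    \<le> R * (\<Sum>p | prime p \<and> real p \<le> (R + 1) powr 4. real p powr (s - 1)) + (5 * R + 2) * zeta_5_4"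
proof -
  define T where "T p = ln (\<Sum>v\<le>N. euler_term r s (real p) v)" for p :: nat
  have "(\<Sum>p | prime p \<and> p \<le> N. T p)
      = (\<Sum>p | prime p \<and> p \<le> N \<and> real p \<le> (R + 1) powr 4. T p)
        + (\<Sum>p | prime p \<and> p \<le> N \<and> (R + 1) powr 4 < real p. T p)"
    by (subst sum.union_disjoint[symmetric]) (auto intro: sum.cong)
  also have "\<dots> \<le> R * (\<Sum>p | prime p \<and> real p \<le> (R + 1) powr 4. real p powr (s - 1)) + 4 * R * zeta_5_4
      + (R + 2) * zeta_5_4"
    unfolding T_def using r R s by (intro add_mono sum_ln_euler_factor_le_small sum_ln_euler_factor_le_large)
  finally show ?thesis
    unfolding T_def by (simp add: algebra_simps)
qed

lemma sum_norm_dz_weighted_le: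
  fixes z :: complex and s R :: real
  assumes s: "0 \<le> s" "s \<le> 1/8" and R: "1 \<le> R" "norm z \<le> R"
  shows "(\<Sum>m=1..N. norm (dz z m) * real m powr (s - 1) / real (sqfree_part m))
    \<le> exp (R * (\<Sum>p | prime p \<and> real p \<le> (R + 1) powr 4. real p powr (s - 1)) + (5 * R + 2) * zeta_5_4)"
proof -
  let ?T = "\<lambda>p. \<Sum>v\<le>N. euler_term (norm z) s (real p) v"
  have "(\<Sum>m=1..N. norm (dz z m) * real m powr (s - 1) / real (sqfree_part m))
      \<le> (\<Sum>m=1..N. \<Prod>p\<in>prime_factors m. euler_term (norm z) s (real p) (multiplicity p m))"
    by (intro sum_mono norm_dz_weighted_le_prod_euler_term) auto
  also have "\<dots> \<le> (\<Prod>p | prime p \<and> p \<le> N. ?T p)"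
    by (rule sum_multiplicative_le_euler_product) (auto intro: euler_term_nonneg)
  also have "\<dots> = exp (\<Sum>p | prime p \<and> p \<le> N. ln (?T p))"
    using one_le_sum_euler_term[of "norm z"] by (simp add: exp_sum less_le_trans[OF zero_less_one])
  also have "\<dots> \<le> exp (R * (\<Sum>p | prime p \<and> real p \<le> (R + 1) powr 4. real p powr (s - 1)) + (5 * R + 2) * zeta_5_4)"
    using sum_ln_euler_factor_le[OF _ R(2) R(1) s] by simp
  finally show ?thesis .
qed

section \<open>Bounding the series\<close>

text \<open>Either \<open>ln (1 + m) powr \<kappa> \<ge> L\<close>, or \<open>ln m < L powr (1/\<kappa>)\<close> and the whole power is at most
  \<open>exp (A * ln (1 + m) powr (1 - \<kappa>))\<close>.\<close>
lemma powr_div_ln_powr_le: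
  fixes A \<kappa> L :: real and m :: nat
  assumes A: "A \<ge> 0" and \<kappa>: "0 < \<kappa>" "\<kappa> < 1" and L: "L > 0" and m: "m \<ge> 1"
  shows "real m powr (A / ln (1 + real m) powr \<kappa>) \<le> exp (A * L powr (1/\<kappa> - 1)) * real m powr (A / L)"
proof -
  define l where "l = ln (1 + real m)"
  have l: "l > 0" "ln (real m) \<le> l" "0 \<le> ln (real m)"
    unfolding l_def using m by auto
  have E: "1 \<le> exp (A * L powr (1/\<kappa> - 1))"
    using A L by simp
  have P: "1 \<le> real m powr (A / L)"
    using m A L by (intro ge_one_powr_ge_zero) auto
  show ?thesis
  proof (cases "L powr (1/\<kappa>) \<le> l")
    case True
    have "L = (L powr (1/\<kappa>)) powr \<kappa>"
      using L \<kappa> by (simp add: powr_powr)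
    also have "\<dots> \<le> l powr \<kappa>"
      using True L \<kappa> by (intro powr_mono2) auto
    finally have "A / l powr \<kappa> \<le> A / L"
      using A L l by (intro divide_left_mono) auto
    then have "real m powr (A / l powr \<kappa>) \<le> real m powr (A / L)"
      using m by (intro powr_mono) auto
    also have "\<dots> \<le> exp (A * L powr (1/\<kappa> - 1)) * real m powr (A / L)"
      using mult_right_mono[OF E, of "real m powr (A / L)"] by simp
    finally show ?thesis
      unfolding l_def .
  next
    case False
    have "ln (real m) * (A / l powr \<kappa>) \<le> l * (A / l powr \<kappa>)"
      using l A by (intro mult_right_mono) auto
    also have "\<dots> = A * l powr (1 - \<kappa>)"
      using l by (simp add: powr_diff)
    also have "\<dots> \<le> A * (L powr (1/\<kappa>)) powr (1 - \<kappa>)"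
      using False l \<kappa> A by (intro mult_left_mono powr_mono2) auto
    also have "\<dots> = A * L powr (1/\<kappa> - 1)"
      using L \<kappa> by (simp add: powr_powr field_simps)
    finally have "real m powr (A / l powr \<kappa>) \<le> exp (A * L powr (1/\<kappa> - 1))"
      using m by (simp add: powr_def mult.commute)
    also have "\<dots> \<le> exp (A * L powr (1/\<kappa> - 1)) * real m powr (A / L)"
      using mult_left_mono[OF P, of "exp (A * L powr (1/\<kappa> - 1))"] by simp
    finally show ?thesis
      unfolding l_def .
  qed
qed

lemma norm_dz_term_le:
  fixes \<kappa> A C L :: real and w z :: complex
  assumes \<kappa>: "0 < \<kappa>" "\<kappa> < 1" and A: "0 \<le> A" and C: "0 \<le> C" and L: "0 < L" and m: "m \<ge> 1"
    and w: "norm w \<le> C * real m powr (A * (1 / ln (1 + real m) powr \<kappa> + 1 / L)) / real (sqfree_part m)"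
  shows "norm (dz z m / of_nat m * w)
    \<le> C * exp (A * L powr (1/\<kappa> - 1)) * (norm (dz z m) * real m powr (2 * A / L - 1) / real (sqfree_part m))"
proof -
  define E where "E = exp (A * L powr (1/\<kappa> - 1))"
  have "real m powr (A * (1 / ln (1 + real m) powr \<kappa> + 1 / L))
      = real m powr (A / ln (1 + real m) powr \<kappa>) * real m powr (A / L)"
    by (simp add: powr_add[symmetric] algebra_simps)
  also have "\<dots> \<le> E * real m powr (A / L) * real m powr (A / L)"
    unfolding E_def using powr_div_ln_powr_le[OF A \<kappa> L m] by (intro mult_right_mono) auto
  also have "\<dots> = E * real m powr (2 * A / L)"
    by (simp add: powr_add[symmetric] algebra_simps)
  finally have "norm w \<le> C * (E * real m powr (2 * A / L)) / real (sqfree_part m)"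
    using w C by (smt (verit) divide_right_mono mult_left_mono of_nat_0_le_iff)
  then have "norm (dz z m / of_nat m * w)
      \<le> norm (dz z m) / real m * (C * (E * real m powr (2 * A / L)) / real (sqfree_part m))"
    unfolding norm_mult norm_divide norm_of_nat by (intro mult_left_mono) auto
  also have "\<dots> = C * E * (norm (dz z m) * real m powr (2 * A / L - 1) / real (sqfree_part m))"
    using m by (simp add: powr_diff field_simps)
  finally show ?thesis
    unfolding E_def .
qed

definition dz_sum_exponent :: "real \<Rightarrow> real \<Rightarrow> real \<Rightarrow> real \<Rightarrow> real \<Rightarrow> real" where
  "dz_sum_exponent \<kappa> A \<eta> L R = A * L powr (1/\<kappa> - 1)
    + R * (exp (2 * A * \<eta>) * (2 * ln L + 2 - 2 * ln (ln 2)) + 8 * exp (8 * A) / \<eta>)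
    + (5 * R + 2) * zeta_5_4"

lemma sum_norm_dz_terms_le:
  fixes \<kappa> A C L R \<eta> :: real and z :: complex and a :: "nat \<Rightarrow> complex"
  assumes \<kappa>: "0 < \<kappa>" "\<kappa> < 1" and A: "0 \<le> A" "16 * A \<le> L" and C: "0 \<le> C"
    and \<eta>: "0 < \<eta>" "\<eta> \<le> 1" "ln 2 \<le> \<eta> * L" and R: "1 \<le> R" "ln (R + 1) \<le> L" and z: "norm z \<le> R"
    and a: "\<forall>m\<ge>1. norm (a m) \<le> C * real m powr (A * (1 / ln (1 + real m) powr \<kappa> + 1 / L)) / real (sqfree_part m)"
  shows "(\<Sum>m=1..N. norm (dz z m / of_nat m * a m)) \<le> C * exp (dz_sum_exponent \<kappa> A \<eta> L R)"
proof -
  define s where "s = 2 * A / L"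
  define Y where "Y = (R + 1) powr 4"
  define E where "E = exp (A * L powr (1/\<kappa> - 1))"
  have "0 < ln (2::real)"
    by simp
  then have L: "0 < L"
    using \<eta> by (smt (verit) mult_nonneg_nonpos)
  have s: "0 \<le> s" "s \<le> 1/8"
    unfolding s_def using A L by (auto simp: field_simps)
  have Y: "1 \<le> Y" "ln Y \<le> 4 * L"
    unfolding Y_def using R by (auto simp: ge_one_powr_ge_zero ln_realpow)
  have "(\<Sum>m=1..N. norm (dz z m / of_nat m * a m))
      \<le> (\<Sum>m=1..N. C * E * (norm (dz z m) * real m powr (s - 1) / real (sqfree_part m)))"
    unfolding s_def E_def using a by (intro sum_mono norm_dz_term_le[OF \<kappa> A(1) C L]) auto
  also have "\<dots> = C * E * (\<Sum>m=1..N. norm (dz z m) * real m powr (s - 1) / real (sqfree_part m))"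
    by (simp add: sum_distrib_left)
  also have "\<dots> \<le> C * E * exp (R * (\<Sum>p | prime p \<and> real p \<le> Y. real p powr (s - 1)) + (5 * R + 2) * zeta_5_4)"
    unfolding Y_def E_def using s R z C by (intro mult_left_mono sum_norm_dz_weighted_le) auto
  also have "\<dots> \<le> C * E * exp (R * (exp (2 * A * \<eta>) * (2 * ln L + 2 - 2 * ln (ln 2)) + 8 * exp (8 * A) / \<eta>)
      + (5 * R + 2) * zeta_5_4)"
    using sum_primes_powr_scaled_le[OF A(1) \<eta> Y] R C unfolding s_def E_def
    by (intro mult_left_mono) auto
  finally show ?thesis
    unfolding E_def dz_sum_exponent_def by (simp add: exp_add mult.assoc)
qed

lemma summable_norm_Suc_and_norm_suminf_le:
  fixes g :: "nat \<Rightarrow> 'a::banach"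
  assumes "\<And>n. (\<Sum>m=1..n. norm (g m)) \<le> K"
  shows "summable (\<lambda>m. norm (g (Suc m))) \<and> norm (\<Sum>m. g (Suc m)) \<le> K"
proof
  have partial: "(\<Sum>m<n. norm (g (Suc m))) \<le> K" for n
    using assms[of n] by (simp add: sum.atLeast1_atMost_eq)
  show summable: "summable (\<lambda>m. norm (g (Suc m)))"
    by (rule summableI_nonneg_bounded[OF _ partial]) simp
  show "norm (\<Sum>m. g (Suc m)) \<le> K"
    using summable_norm[OF summable] suminf_le_const[OF summable partial] by linarith
qed

lemma dz_series_le:
  fixes \<kappa> A C L R \<eta> T :: real and z :: complex and a :: "nat \<Rightarrow> complex"
  assumes \<kappa>: "0 < \<kappa>" "\<kappa> < 1" and A: "0 \<le> A" "16 * A \<le> L" and C: "0 < C"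
    and \<eta>: "0 < \<eta>" "\<eta> \<le> 1" "ln 2 \<le> \<eta> * L" and R: "1 \<le> R" "ln (R + 1) \<le> L" and z: "norm z \<le> R"
    and a: "\<forall>m\<ge>1. norm (a m) \<le> C * real m powr (A * (1 / ln (1 + real m) powr \<kappa> + 1 / L)) / real (sqfree_part m)"
    and T: "ln C + dz_sum_exponent \<kappa> A \<eta> L R \<le> T"
  shows "summable (\<lambda>m. norm (dz z (Suc m) / of_nat (Suc m) * a (Suc m)))
    \<and> norm (\<Sum>m. dz z (Suc m) / of_nat (Suc m) * a (Suc m)) \<le> exp T"
proof (rule summable_norm_Suc_and_norm_suminf_le)
  fix n
  have "(\<Sum>m=1..n. norm (dz z m / of_nat m * a m)) \<le> C * exp (dz_sum_exponent \<kappa> A \<eta> L R)"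
    using C by (intro sum_norm_dz_terms_le[OF \<kappa> A _ \<eta> R z a]) auto
  also have "\<dots> = exp (ln C + dz_sum_exponent \<kappa> A \<eta> L R)"
    using C by (simp add: exp_add)
  also have "\<dots> \<le> exp T"
    using T by simp
  finally show "(\<Sum>m=1..n. norm (dz z m / of_nat m * a m)) \<le> exp T" .
qed

lemma coeff_bound_mono:
  fixes A C A' C' L \<kappa> :: real and w :: complex
  assumes "A \<le> A'" "C \<le> C'" "0 \<le> C'" "0 < L" "m \<ge> 1"
    and "norm w \<le> C * real m powr (A * (1 / ln (1 + real m) powr \<kappa> + 1 / L)) / real (sqfree_part m)"
  shows "norm w \<le> C' * real m powr (A' * (1 / ln (1 + real m) powr \<kappa> + 1 / L)) / real (sqfree_part m)"
proof -
  define \<beta> where "\<beta> = 1 / ln (1 + real m) powr \<kappa> + 1 / L"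
  have "0 \<le> \<beta>"
    unfolding \<beta>_def using assms by simp
  then have "C * real m powr (A * \<beta>) \<le> C' * real m powr (A' * \<beta>)"
    using assms by (intro mult_mono powr_mono mult_right_mono) auto
  then show ?thesis
    using assms sqfree_part_pos[of m] unfolding \<beta>_def[symmetric]
    by (meson divide_right_mono of_nat_0_le_iff order_trans)
qed

lemma eventually_exponent_le:
  fixes \<kappa> A C B \<eta> \<epsilon> :: real
  assumes \<kappa>: "0 < \<kappa>" and A: "0 < A" and C: "0 < C" and B: "0 < B" and \<eta>: "0 < \<eta>" and \<epsilon>: "0 < \<epsilon>"
    and \<eta>_small: "exp (2 * A * \<eta>) \<le> 1 + \<epsilon> / (4 * B)"
  shows "\<forall>\<^sub>F x in at_top.
    ln C + dz_sum_exponent \<kappa> A \<eta> (ln (ln x)) (B * ln x / (ln (ln x) * ln (ln (ln x))))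
      \<le> (2 * B + \<epsilon>) * ln x / ln (ln x)"
proof -
  define R where "R x = B * ln x / (ln (ln x) * ln (ln (ln x)))" for x :: real
  define Q where "Q x = ln x / ln (ln x)" for x :: real
  define D where "D = exp (2 * A * \<eta>) * (2 - 2 * ln (ln 2)) + 8 * exp (8 * A) / \<eta> + 5 * zeta_5_4"
  have "\<forall>\<^sub>F x in at_top. 0 < ln (ln (ln x)) \<and> 0 < Q x
      \<and> ln C + 2 * zeta_5_4 \<le> \<epsilon> / 6 * Q x \<and> A * ln (ln x) powr (1/\<kappa> - 1) \<le> \<epsilon> / 6 * Q x
      \<and> B * D / ln (ln (ln x)) \<le> \<epsilon> / 6"
    unfolding Q_def using \<epsilon> A by (intro eventually_conj; real_asymp)
  then have "\<forall>\<^sub>F x in at_top. ln C + dz_sum_exponent \<kappa> A \<eta> (ln (ln x)) (R x) \<le> (2 * B + \<epsilon>) * ln x / ln (ln x)"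
  proof eventually_elim
    case (elim x)
    then have R: "R x * ln (ln (ln x)) = B * Q x" and RD: "R x * D = B * D / ln (ln (ln x)) * Q x"
      unfolding R_def Q_def by (simp_all add: field_simps)
    have "R x * (exp (2 * A * \<eta>) * (2 * ln (ln (ln x)) + 2 - 2 * ln (ln 2)) + 8 * exp (8 * A) / \<eta>)
        + (5 * R x + 2) * zeta_5_4
        = 2 * exp (2 * A * \<eta>) * (R x * ln (ln (ln x))) + R x * D + 2 * zeta_5_4"
      unfolding D_def by (simp add: algebra_simps)
    also have "\<dots> = 2 * B * exp (2 * A * \<eta>) * Q x + B * D / ln (ln (ln x)) * Q x + 2 * zeta_5_4"
      unfolding R RD by simp
    also have "\<dots> \<le> 2 * B * (1 + \<epsilon> / (4 * B)) * Q x + \<epsilon> / 6 * Q x + 2 * zeta_5_4"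
      using elim \<eta>_small B by (intro add_mono mult_right_mono mult_left_mono) auto
    also have "\<dots> = (2 * B + \<epsilon> / 2 + \<epsilon> / 6) * Q x + 2 * zeta_5_4"
      using B by (simp add: field_simps)
    finally have "R x * (exp (2 * A * \<eta>) * (2 * ln (ln (ln x)) + 2 - 2 * ln (ln 2)) + 8 * exp (8 * A) / \<eta>)
        + (5 * R x + 2) * zeta_5_4 \<le> (2 * B + \<epsilon> / 2 + \<epsilon> / 6) * Q x + 2 * zeta_5_4" .
    moreover have "(2 * B + \<epsilon>) * ln x / ln (ln x) = (2 * B + \<epsilon> / 2 + \<epsilon> / 6) * Q x + \<epsilon> / 6 * Q x + \<epsilon> / 6 * Q x"
      unfolding Q_def by (simp add: algebra_simps add_divide_distrib)
    ultimately show ?case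
      using elim unfolding dz_sum_exponent_def by linarith
  qed
  then show ?thesis
    unfolding R_def .
qed

theorem lemma19:
  fixes \<kappa> B C A \<epsilon> :: real
  assumes "0 < \<kappa>" and "\<kappa> < 1/2" and "B > 0" and "\<epsilon> > 0"
  shows "\<forall>\<^sub>F x in at_top.
    \<forall>(a :: nat \<Rightarrow> complex) (z :: complex).
      (\<forall>m\<ge>1. norm (a m) \<le> C * real m powr (A * (1 / ln (1 + real m) powr \<kappa> + 1 / ln (ln x)))
                               / real (sqfree_part m))
      \<longrightarrow> norm z \<le> B * ln x / (ln (ln x) * ln (ln (ln x)))
      \<longrightarrow> summable (\<lambda>m. norm (dz z (Suc m) / of_nat (Suc m) * a (Suc m)))
          \<and> norm (\<Sum>m. dz z (Suc m) / of_nat (Suc m) * a (Suc m))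
              \<le> exp ((2 * B + \<epsilon>) * ln x / ln (ln x))"
proof -
  define A' where "A' = max A 1"
  define C' where "C' = max C 1"
  have A': "A \<le> A'" "1 \<le> A'" and C': "C \<le> C'" "1 \<le> C'"
    unfolding A'_def C'_def by auto
  have "\<forall>\<^sub>F \<eta> in at_right 0. 0 < \<eta> \<and> \<eta> \<le> 1 \<and> exp (2 * A' * \<eta>) \<le> 1 + \<epsilon> / (4 * B)"
    using assms by (intro eventually_conj; real_asymp)
  then obtain \<eta> where \<eta>: "0 < \<eta>" "\<eta> \<le> 1" "exp (2 * A' * \<eta>) \<le> 1 + \<epsilon> / (4 * B)"
    using eventually_happens'[OF trivial_limit_at_right_real] by blast
  define R where "R x = B * ln x / (ln (ln x) * ln (ln (ln x)))" for x :: real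
  have "\<forall>\<^sub>F x in at_top. 16 * A' \<le> ln (ln x) \<and> ln 2 \<le> \<eta> * ln (ln x) \<and> 1 \<le> R x \<and> ln (R x + 1) \<le> ln (ln x)"
    unfolding R_def using assms \<eta> by (intro eventually_conj; real_asymp)
  moreover have "\<forall>\<^sub>F x in at_top. ln C' + dz_sum_exponent \<kappa> A' \<eta> (ln (ln x)) (R x) \<le> (2 * B + \<epsilon>) * ln x / ln (ln x)"
    unfolding R_def using assms \<eta> A' C' by (intro eventually_exponent_le) auto
  ultimately show ?thesis
  proof eventually_elim
    case (elim x)
    then show ?case
      using assms \<eta> A' C' unfolding R_def
      by (intro allI impI dz_series_le[where A = A' and C = C' and \<eta> = \<eta> and L = "ln (ln x)"])
        (auto intro: coeff_bound_mono)
  qed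
qed

end
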